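(* Let $n\ge1$, $k\ge2$, $r=n(k-1)$, and let $\mathbf c_0$ be a stable configuration on the hyperpath $P_n^k$ with bank vertex $0$. Let $\mathcal G(\mathbf c_0)$ be its firing graph. Then: (i) for every $t\in[n]$ and every configuration $\mathbf c$ of $\mathcal G(\mathbf c_0)$, the vertex $t(k-1)$ is fired at $\mathbf c$ (i.e. $\mathbf c$ is not stable and $u_{\mathbf c}=t(k-1)$) if and only if $\mathbf c(t(k-1))=k-1$; (ii) for every configuration $\mathbf c$ of $\mathcal G(\mathbf c_0)$, $\omega(\mathbf c)\ge\omega(\mathbf c_0)$.
   Context: The $k$-uniform hyperpath $P_n^k$ has vertex set $\{0,1,\dots,n(k-1)\}$ and edges $\mathbf e_t=\{(k-1)(t-1),(k-1)(t-1)+1,\dots,(k-1)t\}$ for $t\in[n]$. A configuration is a function $\mathbf c:[r]\to\mathbb Z_{\ge0}$ (the value at the bank vertex $0$ is ignored), with weight $\omega(\mathbf c)=\sum_{v=1}^r\mathbf c(v)$. It is stable if $0\le\mathbf c(v)\le k-2$ for all $v\in[r]$. For a stable $\mathbf c_0$ put $\bar{\mathbf c}_0(v)=\mathbf c_0(v)+1$ for $v\in[k-1]$ and $\bar{\mathbf c}_0(v)=\mathbf c_0(v)$ otherwise. For a non-stable configuration $\mathbf c$ let $u_{\mathbf c}=\max\{v\in[r]:\mathbf c(v)\ge k-1\}$; for each edge $\mathbf e$ containing $u_{\mathbf c}$ define $\mathbf c_{\mathbf e}$ by $\mathbf c_{\mathbf e}(u_{\mathbf c})=\mathbf c(u_{\mathbf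 c})-(k-1)$, $\mathbf c_{\mathbf e}(v)=\mathbf c(v)+1$ for $v\in\mathbf e\setminus\{u_{\mathbf c},0\}$, and $\mathbf c_{\mathbf e}(v)=\mathbf c(v)$ otherwise ("firing $u_{\mathbf c}$ on $\mathbf e$"). The firing graph $\mathcal G(\mathbf c_0)$ is the directed graph whose vertices are $\mathbf c_0$ together with all configurations obtainable from $\bar{\mathbf c}_0$ by finitely many such firing steps (each applied to a non-stable configuration), and whose arrows are $\mathbf c_0\to\bar{\mathbf c}_0$ and $\mathbf c\to\mathbf c_{\mathbf e}$ for every non-stable vertex $\mathbf c$ and every edge $\mathbf e\ni u_{\mathbf c}$. *)

theory Defs
  imports Main
begin

text \<open>Hyperpath P_n^k: vertices 0..n(k-1), edge t = {(k-1)(t-1) .. (k-1)t} for t in [n].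
  Configurations are functions nat => nat; only values on [r] = {1..r} matter.
  Convention: a configuration is represented canonically with value 0 outside [r]
  (in particular at the bank vertex 0).\<close>

definition hp_r :: "nat \<Rightarrow> nat \<Rightarrow> nat" where
  "hp_r n k = n * (k - 1)"

definition hp_edge :: "nat \<Rightarrow> nat \<Rightarrow> nat set" where
  "hp_edge k t = {(k - 1) * (t - 1) .. (k - 1) * t}"

definition is_config :: "nat \<Rightarrow> nat \<Rightarrow> (nat \<Rightarrow> nat) \<Rightarrow> bool" where
  "is_config n k c \<longleftrightarrow> (\<forall>v. v \<notin> {1..hp_r n k} \<longrightarrow> c v = 0)"

definition weight :: "nat \<Rightarrow> nat \<Rightarrow> (nat \<Rightarrow> nat) \<Rightarrow> nat" where
  "weight n k c = (\<Sum>v = 1..hp_r n k. c v)"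

definition stable :: "nat \<Rightarrow> nat \<Rightarrow> (nat \<Rightarrow> nat) \<Rightarrow> bool" where
  "stable n k c \<longleftrightarrow> (\<forall>v\<in>{1..hp_r n k}. c v \<le> k - 2)"

definition cbar :: "nat \<Rightarrow> (nat \<Rightarrow> nat) \<Rightarrow> (nat \<Rightarrow> nat)" where
  "cbar k c = (\<lambda>v. if v \<in> {1..k - 1} then c v + 1 else c v)"

definition u_fire :: "nat \<Rightarrow> nat \<Rightarrow> (nat \<Rightarrow> nat) \<Rightarrow> nat" where
  "u_fire n k c = Max {v \<in> {1..hp_r n k}. k - 1 \<le> c v}"

definition fire_on :: "nat \<Rightarrow> nat \<Rightarrow> (nat \<Rightarrow> nat) \<Rightarrow> nat set \<Rightarrow> (nat \<Rightarrow> nat)" where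
  "fire_on n k c e = (\<lambda>v. if v = u_fire n k c then c v - (k - 1)
                          else if v \<in> e \<and> v \<noteq> 0 then c v + 1 else c v)"

inductive reach :: "nat \<Rightarrow> nat \<Rightarrow> (nat \<Rightarrow> nat) \<Rightarrow> (nat \<Rightarrow> nat) \<Rightarrow> bool"
  for n k c0 where
  start: "reach n k c0 (cbar k c0)"
| step: "reach n k c0 c \<Longrightarrow> \<not> stable n k c \<Longrightarrow> t \<in> {1..n} \<Longrightarrow>
           u_fire n k c \<in> hp_edge k t \<Longrightarrow> reach n k c0 (fire_on n k c (hp_edge k t))"

definition firing_graph_vertices :: "nat \<Rightarrow> nat \<Rightarrow> (nat \<Rightarrow> nat) \<Rightarrow> (nat \<Rightarrow> nat) set" where
  "firing_graph_vertices n k c0 = insert c0 {c. reach n k c0 c}"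

definition firing_graph_arrows :: "nat \<Rightarrow> nat \<Rightarrow> (nat \<Rightarrow> nat) \<Rightarrow> ((nat \<Rightarrow> nat) \<times> (nat \<Rightarrow> nat)) set" where
  "firing_graph_arrows n k c0 = insert (c0, cbar k c0)
     {(c, fire_on n k c (hp_edge k t)) | c t. c \<in> firing_graph_vertices n k c0 \<and>
        \<not> stable n k c \<and> t \<in> {1..n} \<and> u_fire n k c \<in> hp_edge k t}"

end

theory Submission
  imports Defs
begin

text \<open>Write K = k - 1 and call {K(s-1)<..Ks} the s-th block of the hyperpath; its left end
  K(s-1) is the junction with block s - 1, or the bank for s = 1. Along every firing sequence
  there is an active block s: if p is the value at its left end, then p plus the number of
  vertices of the block holding at least p chips is at most K. Every block below s is suspended,
  i.e. satisfies the same bound with its right junction counted as one more such vertex, and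
  every vertex above block s holds fewer than K chips. Firing inside the active block raises p
  by one and removes the fired vertex from the count; firing its right junction into the next
  block empties that junction, which suspends the block and activates the next one. Hence every
  left end, the bank included, holds at most K chips, and a junction holding K chips must be the
  largest unstable vertex. Since cbar adds K chips and firing conserves chips once those sent to
  the bank are kept, the bank bound is the weight bound.\<close>

definition fire_at :: "nat \<Rightarrow> (nat \<Rightarrow> nat) \<Rightarrow> nat \<Rightarrow> nat set \<Rightarrow> nat \<Rightarrow> nat" where
  "fire_at K d u e = (\<lambda>v. if v = u then d v - K else if v \<in> e then d v + 1 else d v)"

lemma fire_at_self [simp]: "fire_at K d u e u = d u - K"
  by (simp add: fire_at_def)

lemma fire_at_edge: "v \<noteq> u \<Longrightarrow> v \<in> e \<Longrightarrow> fire_at K d u e v = d v + 1"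
  by (simp add: fire_at_def)

lemma fire_at_other: "v \<noteq> u \<Longrightarrow> v \<notin> e \<Longrightarrow> fire_at K d u e v = d v"
  by (simp add: fire_at_def)

lemma sum_fire_at:
  assumes "finite A" "e \<subseteq> A" "u \<in> e" "card e = K + 1" "K \<le> d u"
  shows "sum (fire_at K d u e) A = sum d A"
proof -
  have fin: "finite e" using assms(1,2) by (rule finite_subset[rotated])
  have split: "sum f A = f u + sum f (e - {u}) + sum f (A - e)" for f :: "nat \<Rightarrow> nat"
    using sum.subset_diff[OF assms(2,1), of f] sum.remove[OF fin assms(3), of f] by simp
  have "sum (fire_at K d u e) (e - {u}) = sum (\<lambda>v. d v + 1) (e - {u})"
    by (intro sum.cong) (auto simp: fire_at_edge)
  also have "\<dots> = sum d (e - {u}) + card (e - {u})"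
    using sum.distrib[of d "\<lambda>_. 1" "e - {u}"] by simp
  also have "card (e - {u}) = K"
    using assms(3,4) fin by simp
  finally have edge: "sum (fire_at K d u e) (e - {u}) = sum d (e - {u}) + K" .
  have rest: "sum (fire_at K d u e) (A - e) = sum d (A - e)"
    using assms(3) by (intro sum.cong) (auto simp: fire_at_def)
  show ?thesis
    using split[of "fire_at K d u e"] split[of d] edge rest assms(5) by simp
qed

lemma block_of_vertex:
  fixes K m v :: nat
  assumes "K \<ge> 1" "v \<in> {1..K*m}"
  obtains s where "s \<in> {1..m}" "v \<in> {K*(s-1)<..K*s}"
proof
  let ?s = "(v - 1) div K + 1"
  have "K * ((v - 1) div K) \<le> v - 1" by (rule times_div_less_eq_dividend)
  moreover have "v \<ge> 1" using assms(2) by simp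
  ultimately have "K * ((v - 1) div K) < v" by linarith
  moreover have "v - 1 < K * ((v - 1) div K) + K"
  proof -
    have "(v - 1) div K * K + (v - 1) mod K = v - 1" by (rule div_mult_mod_eq)
    moreover have "(v - 1) mod K < K" using assms(1) by simp
    moreover have "K * ((v - 1) div K) = (v - 1) div K * K" by (rule mult.commute)
    ultimately show ?thesis by linarith
  qed
  ultimately show "v \<in> {K*(?s-1)<..K*?s}" by simp
  have "v - 1 < m * K" using assms by (auto simp: mult.commute)
  then show "?s \<in> {1..m}" by (simp add: less_mult_imp_div_less Suc_leI)
qed

lemma block_mono:
  fixes K v s t :: nat
  assumes "v \<in> {K*(s-1)<..K*s}" "v \<le> K*t"
  shows "s \<le> t"
proof -
  have "K*(s-1) < K*t" using assms by (meson greaterThanAtMost_iff less_le_trans)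
  then have "s - 1 < t" by simp
  then show ?thesis by linarith
qed

lemma edge_block_cases:
  fixes K u s t :: nat
  assumes "K \<ge> 1" "u \<in> {K*(s-1)<..K*s}" "u \<in> {K*(t-1)..K*t}"
  shows "t = s \<or> (t = s + 1 \<and> u = K*s)"
proof -
  have "K*(s-1) < K*t"
    using assms(2,3) by (meson atLeastAtMost_iff greaterThanAtMost_iff less_le_trans)
  then have "s - 1 < t" by simp
  moreover have "K*(t-1) \<le> K*s"
    using assms(2,3) by (meson atLeastAtMost_iff greaterThanAtMost_iff order_trans)
  then have "t - 1 \<le> s" using assms(1) by simp
  ultimately have "t = s \<or> t = s + 1" by linarith
  then show ?thesis using assms(2,3) by auto
qed

definition active_block :: "nat \<Rightarrow> (nat \<Rightarrow> nat) \<Rightarrow> nat \<Rightarrow> bool" where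
  "active_block K d s \<longleftrightarrow>
     d (K*(s-1)) + card {v \<in> {K*(s-1)<..K*s}. d (K*(s-1)) \<le> d v} \<le> K
     \<and> (\<forall>v\<in>{K*(s-1)<..K*s}. d v \<le> K + d (K*(s-1))) \<and> d (K*s) \<le> K"

definition suspended_block :: "nat \<Rightarrow> (nat \<Rightarrow> nat) \<Rightarrow> nat \<Rightarrow> bool" where
  "suspended_block K d t \<longleftrightarrow>
     d (K*(t-1)) + 1 + card {v \<in> {K*(t-1)<..<K*t}. d (K*(t-1)) \<le> d v} \<le> K
     \<and> (\<forall>v\<in>{K*(t-1)<..<K*t}. d v \<le> K + d (K*(t-1))) \<and> d (K*t) \<le> K"

lemma suspended_block_left_less: "suspended_block K d t \<Longrightarrow> d (K*(t-1)) < K"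
  by (simp add: suspended_block_def)

lemma active_block_left_le: "active_block K d s \<Longrightarrow> d (K*(s-1)) \<le> K"
  by (simp add: active_block_def)

lemma active_block_left_less:
  assumes "active_block K d s" "u \<in> {K*(s-1)<..K*s}" "K \<le> d u"
  shows "d (K*(s-1)) < K"
proof -
  let ?A = "{v \<in> {K*(s-1)<..K*s}. d (K*(s-1)) \<le> d v}"
  have bound: "d (K*(s-1)) + card ?A \<le> K" using assms(1) by (simp add: active_block_def)
  then have "d (K*(s-1)) \<le> d u" using assms(3) by linarith
  then have "u \<in> ?A" using assms(2) by simp
  then have "card ?A > 0" by (simp add: card_gt_0_iff) blast
  then show ?thesis using bound by linarith
qed

lemma suspended_block_cong:
  assumes "K \<ge> 1" "t \<ge> 1" "suspended_block K d t"
    and "\<And>v. v < K*t \<Longrightarrow> d' v = d v" "d' (K*t) \<le> K"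
  shows "suspended_block K d' t"
proof -
  have "K*(t-1) < K*t" using assms(1,2) by simp
  then have "d' (K*(t-1)) = d (K*(t-1))" using assms(4) by blast
  moreover have "{v \<in> {K*(t-1)<..<K*t}. d' (K*(t-1)) \<le> d' v}
      = {v \<in> {K*(t-1)<..<K*t}. d (K*(t-1)) \<le> d v}"
    using assms(4) calculation by auto
  ultimately show ?thesis using assms(3-5) by (simp add: suspended_block_def)
qed

lemma suspended_imp_active_block:
  assumes "suspended_block K d t"
  shows "active_block K d t"
proof -
  let ?p = "d (K*(t-1))"
  let ?A = "{v \<in> {K*(t-1)<..K*t}. ?p \<le> d v}"
  let ?B = "{v \<in> {K*(t-1)<..<K*t}. ?p \<le> d v}"
  have "card ?A \<le> card (insert (K*t) ?B)" by (intro card_mono) auto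
  also have "\<dots> \<le> card ?B + 1" by (simp add: card_insert_if)
  finally have "?p + card ?A \<le> K" using assms by (simp add: suspended_block_def)
  moreover have "d v \<le> K + ?p" if "v \<in> {K*(t-1)<..K*t}" for v
    using that assms by (cases "v = K*t") (auto simp: suspended_block_def)
  moreover have "d (K*t) \<le> K" using assms by (simp add: suspended_block_def)
  ultimately show ?thesis by (simp add: active_block_def)
qed

lemma active_block_full_imp_suspended:
  assumes "K \<ge> 1" "s \<ge> 1" "active_block K d s" "d (K*s) = K"
  shows "suspended_block K d s"
proof -
  let ?p = "d (K*(s-1))"
  let ?B = "{v \<in> {K*(s-1)<..<K*s}. ?p \<le> d v}"
  have "K*(s-1) < K*s" using assms(1,2) by simp
  moreover have "?p \<le> d (K*s)" using active_block_left_le[OF assms(3)] assms(4) by simp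
  ultimately have "{v \<in> {K*(s-1)<..K*s}. ?p \<le> d v} = insert (K*s) ?B" by auto
  then have "card {v \<in> {K*(s-1)<..K*s}. ?p \<le> d v} = card ?B + 1" by simp
  then show ?thesis using assms(3,4) unfolding active_block_def suspended_block_def by simp
qed

lemma active_block_of_zero_left:
  assumes "s \<ge> 1" "d (K*(s-1)) = 0" "\<forall>v\<in>{K*(s-1)<..K*s}. d v \<le> K" "d (K*s) \<le> K"
  shows "active_block K d s"
proof -
  have "card {v \<in> {K*(s-1)<..K*s}. d (K*(s-1)) \<le> d v} \<le> card {K*(s-1)<..K*s}"
    by (intro card_mono) auto
  also have "\<dots> = K" using assms(1) by (simp add: diff_mult_distrib2)
  finally show ?thesis using assms by (simp add: active_block_def)
qed

text \<open>Firing inside the active block raises its left end by one and drops the fired vertex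
  below the new left end, so the left end plus the count of vertices reaching it is unchanged.\<close>
lemma active_block_fire_within:
  assumes "active_block K d s" "u \<in> {K*(s-1)<..K*s}" "K \<le> d u"
    and "u < K*s \<Longrightarrow> d (K*s) < K"
  shows "active_block K (fire_at K d u {K*(s-1)..K*s}) s"
proof -
  let ?d = "fire_at K d u {K*(s-1)..K*s}"
  let ?p = "d (K*(s-1))"
  let ?A = "{v \<in> {K*(s-1)<..K*s}. ?p \<le> d v}"
  let ?A' = "{v \<in> {K*(s-1)<..K*s}. ?p + 1 \<le> ?d v}"
  have bound: "?p + card ?A \<le> K" and high: "\<forall>v\<in>{K*(s-1)<..K*s}. d v \<le> K + ?p"
    using assms(1) by (auto simp: active_block_def)
  have left: "?d (K*(s-1)) = ?p + 1" using assms(2) by (simp add: fire_at_edge)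
  have "d u \<le> K + ?p" using high assms(2) by blast
  then have fired: "?d u \<le> ?p" by simp
  have "?p \<le> d u" using bound assms(3) by linarith
  then have "u \<in> ?A" using assms(2) by simp
  moreover have "?A' \<subseteq> ?A - {u}"
  proof
    fix v assume v: "v \<in> ?A'"
    then have "v \<noteq> u" using fired by auto
    then have "?d v = d v + 1" using v by (simp add: fire_at_edge)
    then show "v \<in> ?A - {u}" using v \<open>v \<noteq> u\<close> by simp
  qed
  ultimately have "card ?A' \<le> card ?A - 1" using card_mono[of "?A - {u}" ?A'] by simp
  moreover have "card ?A > 0" using \<open>u \<in> ?A\<close> by (simp add: card_gt_0_iff) blast
  ultimately have count: "?d (K*(s-1)) + card ?A' \<le> K" using bound left by linarith
  have "?d v \<le> K + ?d (K*(s-1))" if v: "v \<in> {K*(s-1)<..K*s}" for v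
  proof (cases "v = u")
    case False
    then have "?d v = d v + 1" using v by (simp add: fire_at_edge)
    then show ?thesis using high v left by simp
  qed (use fired left in simp)
  moreover have "?d (K*s) \<le> K"
  proof (cases "u = K*s")
    case True
    then show ?thesis using fired bound by simp
  next
    case False
    then show ?thesis using assms(2,4) by (simp add: fire_at_edge)
  qed
  ultimately show ?thesis using count left unfolding active_block_def by simp
qed

definition block_invariant :: "nat \<Rightarrow> nat \<Rightarrow> (nat \<Rightarrow> nat) \<Rightarrow> bool" where
  "block_invariant K m d \<longleftrightarrow> (\<exists>s\<in>{1..m}. (\<forall>t\<in>{1..<s}. suspended_block K d t)
     \<and> active_block K d s \<and> (\<forall>v\<in>{K*s<..K*m}. d v < K))"

lemma block_invariant_loaded_block:
  assumes "K \<ge> 1" "block_invariant K m d" "u \<in> {1..K*m}" "K \<le> d u"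
  obtains s where "s \<in> {1..m}" "u \<in> {K*(s-1)<..K*s}"
    "\<forall>t\<in>{1..<s}. suspended_block K d t" "active_block K d s"
proof -
  obtain s0 where s0: "s0 \<in> {1..m}" and below: "\<forall>t\<in>{1..<s0}. suspended_block K d t"
    and act: "active_block K d s0" and above: "\<forall>v\<in>{K*s0<..K*m}. d v < K"
    using assms(2) unfolding block_invariant_def by blast
  obtain s where s: "s \<in> {1..m}" "u \<in> {K*(s-1)<..K*s}"
    using block_of_vertex[OF assms(1,3)] by blast
  have "u \<le> K*s0"
    using above assms(3,4) by (meson atLeastAtMost_iff greaterThanAtMost_iff not_le not_less)
  with s(2) have "s \<le> s0" by (rule block_mono)
  then have "active_block K d s"
    using act below s(1) by (cases "s = s0") (auto intro: suspended_imp_active_block)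
  then show ?thesis using that s below \<open>s \<le> s0\<close> by auto
qed

lemma block_invariant_fire_within:
  assumes "K \<ge> 1" "s \<in> {1..m}" "u \<in> {K*(s-1)<..K*s}" "K \<le> d u"
    and above: "\<forall>v\<in>{u<..K*m}. d v < K"
    and below: "\<forall>t\<in>{1..<s}. suspended_block K d t" and act: "active_block K d s"
  shows "block_invariant K m (fire_at K d u {K*(s-1)..K*s})"
  unfolding block_invariant_def
proof (intro bexI conjI ballI)
  let ?d = "fire_at K d u {K*(s-1)..K*s}"
  have "K*s \<le> K*m" using assms(2) by simp
  then have "u < K*s \<Longrightarrow> d (K*s) < K" using above by simp
  then show act': "active_block K ?d s"
    by (rule active_block_fire_within[OF act assms(3,4)])
  show "?d v < K" if "v \<in> {K*s<..K*m}" for v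
    using that assms(3) above by (simp add: fire_at_other)
  fix t assume t: "t \<in> {1..<s}"
  then have susp: "suspended_block K d t" using below by blast
  have le: "K*t \<le> K*(s-1)" using t by (intro mult_le_mono2) auto
  have same: "?d v = d v" if "v < K*t" for v
  proof -
    have "v < K*(s-1)" using that le by linarith
    then show ?thesis using assms(3) by (simp add: fire_at_other)
  qed
  have "?d (K*t) \<le> K"
  proof (cases "t = s - 1")
    case True
    then show ?thesis using active_block_left_le[OF act'] by simp
  next
    case False
    then have "t < s - 1" using t by auto
    then have "K*t < K*(s-1)" using assms(1) by simp
    then have "K*t \<noteq> u" "K*t \<notin> {K*(s-1)..K*s}" using assms(3) by auto
    then have "?d (K*t) = d (K*t)" by (rule fire_at_other)
    then show ?thesis using susp by (simp add: suspended_block_def)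
  qed
  then show "suspended_block K ?d t"
    using suspended_block_cong[OF assms(1) _ susp same] t by simp
qed (use assms(2) in simp)

lemma block_invariant_fire_junction:
  assumes "K \<ge> 1" "s \<ge> 1" "s < m" "K \<le> d (K*s)"
    and above: "\<forall>v\<in>{K*s<..K*m}. d v < K"
    and below: "\<forall>t\<in>{1..<s}. suspended_block K d t" and act: "active_block K d s"
  shows "block_invariant K m (fire_at K d (K*s) {K*s..K*(s+1)})"
  unfolding block_invariant_def
proof (intro bexI conjI ballI)
  let ?d = "fire_at K d (K*s) {K*s..K*(s+1)}"
  have full: "d (K*s) = K" using act assms(4) by (simp add: active_block_def)
  then have emptied: "?d (K*s) = 0" by simp
  have same: "?d v = d v" if "v < K*s" for v
    using that by (simp add: fire_at_other)
  have "K*(s+1) \<le> K*m" using assms(3) by (intro mult_le_mono2) simp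
  then have filled: "?d v \<le> K" if "v \<in> {K*s<..K*(s+1)}" for v
  proof -
    have "d v < K"
      using that above \<open>K*(s+1) \<le> K*m\<close> by (meson greaterThanAtMost_iff order_trans)
    then show ?thesis using that by (simp add: fire_at_edge)
  qed
  have "K*s < K*(s+1)" using assms(1) by simp
  then have "?d (K*(s+1)) \<le> K" using filled by simp
  then show "active_block K ?d (s+1)"
    using emptied filled by (intro active_block_of_zero_left) auto
  show "?d v < K" if "v \<in> {K*(s+1)<..K*m}" for v
    using that above by (simp add: fire_at_other)
  fix t assume t: "t \<in> {1..<s+1}"
  show "suspended_block K ?d t"
  proof (cases "t = s")
    case True
    have "suspended_block K d s" by (rule active_block_full_imp_suspended[OF assms(1,2) act full])
    then show ?thesis using True suspended_block_cong[OF assms(1,2) _ same] emptied by simp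
  next
    case False
    then have "t < s" "t \<ge> 1" using t by auto
    then have lt: "K*t < K*s" using assms(1) by simp
    have agree: "?d v = d v" if "v \<le> K*t" for v
      using that lt by (intro same) linarith
    have "suspended_block K d t" using below \<open>t < s\<close> \<open>t \<ge> 1\<close> by simp
    moreover have "?d (K*t) \<le> K"
      using agree[of "K*t"] calculation by (simp add: suspended_block_def)
    ultimately show ?thesis
      using suspended_block_cong[OF assms(1) \<open>t \<ge> 1\<close>] agree by simp
  qed
qed (use assms(3) in simp)

lemma block_invariant_fire:
  assumes "K \<ge> 1" "block_invariant K m d" "u \<in> {1..K*m}" "K \<le> d u"
    and above: "\<forall>v\<in>{u<..K*m}. d v < K"
    and "t \<in> {1..m}" "u \<in> {K*(t-1)..K*t}"
  shows "block_invariant K m (fire_at K d u {K*(t-1)..K*t})"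
proof -
  obtain s where s: "s \<in> {1..m}" "u \<in> {K*(s-1)<..K*s}"
    and below: "\<forall>t\<in>{1..<s}. suspended_block K d t" and act: "active_block K d s"
    using block_invariant_loaded_block[OF assms(1-4)] .
  consider "t = s" | "t = s + 1" "u = K*s"
    using edge_block_cases[OF assms(1) s(2) assms(7)] by blast
  then show ?thesis
  proof cases
    case 1
    then show ?thesis
      using block_invariant_fire_within[OF assms(1) s assms(4) above below act] by simp
  next
    case 2
    then show ?thesis
      using block_invariant_fire_junction[OF assms(1) _ _ _ _ below act] assms(4,6) above s(1)
      by simp
  qed
qed

lemma block_invariant_bank_le:
  assumes "block_invariant K m d"
  shows "d 0 \<le> K"
proof -
  obtain s where "s \<ge> 1" and below: "\<forall>t\<in>{1..<s}. suspended_block K d t"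
    and act: "active_block K d s"
    using assms unfolding block_invariant_def by auto
  show ?thesis
  proof (cases "s = 1")
    case True
    then show ?thesis using active_block_left_le[OF act] by simp
  next
    case False
    then have "suspended_block K d 1" using below \<open>s \<ge> 1\<close> by simp
    then show ?thesis using suspended_block_left_less[of K d 1] by simp
  qed
qed

lemma block_invariant_junction_iff:
  assumes "K \<ge> 1" "block_invariant K m d" "u \<in> {1..K*m}" "K \<le> d u"
    and above: "\<forall>v\<in>{u<..K*m}. d v < K" and t: "t \<in> {1..m}"
  shows "u = K*t \<longleftrightarrow> d (K*t) = K"
proof -
  obtain s where s: "s \<in> {1..m}" "u \<in> {K*(s-1)<..K*s}"
    and below: "\<forall>t\<in>{1..<s}. suspended_block K d t" and act: "active_block K d s"
    using block_invariant_loaded_block[OF assms(1-4)] .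
  show ?thesis
  proof
    assume u: "u = K*t"
    then have "u \<in> {K*(t-1)..K*t}" by simp
    then have "t = s \<or> (t = s + 1 \<and> K*t = K*s)"
      using edge_block_cases[OF assms(1) s(2)] u by simp
    then have "t = s" using assms(1) by auto
    then show "d (K*t) = K" using u assms(4) act by (simp add: active_block_def)
  next
    assume full: "d (K*t) = K"
    have "K*t \<le> K*m" using t by simp
    have "K*t \<le> u"
    proof (rule ccontr)
      assume "\<not> K*t \<le> u"
      then have "K*t \<in> {u<..K*m}" using \<open>K*t \<le> K*m\<close> by simp
      then have "d (K*t) < K" using above by blast
      then show False using full by simp
    qed
    moreover have "\<not> K*t < u"
    proof
      assume "K*t < u"
      also have "u \<le> K*s" using s(2) by simp
      finally have "t < s" by simp
      show False
      proof (cases "t + 1 = s")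
        case True
        then have "s - 1 = t" by simp
        then show False using active_block_left_less[OF act s(2) assms(4)] full by simp
      next
        case False
        then have "suspended_block K d (t + 1)" using below \<open>t < s\<close> by simp
        then show False using suspended_block_left_less[of K d "t + 1"] full by simp
      qed
    qed
    ultimately show "u = K*t" by simp
  qed
qed

lemma u_fire_loaded:
  assumes "k \<ge> 2" "\<not> stable n k c"
  shows "u_fire n k c \<in> {1..(k-1)*n}" "k - 1 \<le> c (u_fire n k c)"
    and "\<forall>v\<in>{u_fire n k c<..(k-1)*n}. c v < k - 1"
proof -
  let ?S = "{v \<in> {1..hp_r n k}. k - 1 \<le> c v}"
  have r: "hp_r n k = (k-1)*n" by (simp add: hp_r_def)
  obtain v where "v \<in> {1..hp_r n k}" "\<not> c v \<le> k - 2"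
    using assms(2) by (auto simp: stable_def)
  then have "v \<in> ?S" using assms(1) by auto
  then have "u_fire n k c \<in> ?S" unfolding u_fire_def by (intro Max_in) auto
  then show u: "u_fire n k c \<in> {1..(k-1)*n}" and "k - 1 \<le> c (u_fire n k c)" using r by auto
  have max: "v \<le> u_fire n k c" if "v \<in> ?S" for v
    unfolding u_fire_def using that by (intro Max_ge) auto
  show "\<forall>v\<in>{u_fire n k c<..(k-1)*n}. c v < k - 1"
  proof
    fix v assume v: "v \<in> {u_fire n k c<..(k-1)*n}"
    then have "v \<in> {1..hp_r n k}" using u r by auto
    then have "\<not> k - 1 \<le> c v" using max[of v] v by auto
    then show "c v < k - 1" by simp
  qed
qed

lemma stable_upd_0 [simp]: "stable n k (c(0 := b)) = stable n k c"
  by (simp add: stable_def)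

lemma u_fire_upd_0 [simp]: "u_fire n k (c(0 := b)) = u_fire n k c"
proof -
  have "{v \<in> {1..hp_r n k}. k - 1 \<le> (c(0 := b)) v} = {v \<in> {1..hp_r n k}. k - 1 \<le> c v}"
    by auto
  then show ?thesis by (simp add: u_fire_def)
qed

text \<open>The firing rule of the paper discards the chips sent to the bank; keeping them instead,
  the value at the bank counts the chips lost so far.\<close>
lemma fire_at_upd_0:
  assumes "u_fire n k c \<noteq> 0"
  shows "fire_at (k-1) (c(0 := b)) (u_fire n k c) e
       = (fire_on n k c e)(0 := fire_at (k-1) (c(0 := b)) (u_fire n k c) e 0)"
  using assms by (auto simp: fire_at_def fire_on_def)

lemma sum_upd_0:
  fixes c :: "nat \<Rightarrow> nat" and r :: nat
  shows "(\<Sum>v=0..r. (c(0 := b)) v) = b + (\<Sum>v=1..r. c v)"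
proof -
  have "(\<Sum>v=0..r. (c(0 := b)) v) = (c(0 := b)) 0 + (\<Sum>v=1..r. (c(0 := b)) v)"
    using sum.atLeast_Suc_atMost[of 0 r "c(0 := b)"] by simp
  also have "(\<Sum>v=1..r. (c(0 := b)) v) = (\<Sum>v=1..r. c v)" by (intro sum.cong) auto
  finally show ?thesis by simp
qed

lemma hp_edge_eq: "hp_edge k t = {(k-1)*(t-1)..(k-1)*t}"
  by (simp add: hp_edge_def)

lemma card_hp_edge: "t \<ge> 1 \<Longrightarrow> card (hp_edge k t) = (k - 1) + 1"
  by (simp add: hp_edge_def diff_mult_distrib2)

lemma hp_edge_subset: "t \<le> n \<Longrightarrow> hp_edge k t \<subseteq> {0..hp_r n k}"
  by (auto simp: hp_edge_def hp_r_def mult.commute intro: order_trans)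

lemma weight_cbar:
  assumes "n \<ge> 1"
  shows "weight n k (cbar k c0) = weight n k c0 + (k - 1)"
proof -
  have "weight n k (cbar k c0) = (\<Sum>v=1..hp_r n k. c0 v + of_bool (v \<in> {1..k-1}))"
    unfolding weight_def cbar_def by (intro sum.cong) auto
  also have "\<dots> = weight n k c0 + (\<Sum>v=1..hp_r n k. of_bool (v \<in> {1..k-1}))"
    unfolding weight_def by (rule sum.distrib)
  also have "(\<Sum>v=1..hp_r n k. of_bool (v \<in> {1..k-1}) :: nat)
      = card ({1..hp_r n k} \<inter> {1..k-1})"
    by (subst sum_of_bool_eq) (simp_all add: Int_def)
  also have "{1..hp_r n k} \<inter> {1..k-1} = {1..k-1}"
    using assms by (auto simp: hp_r_def intro: order_trans)
  finally show ?thesis by simp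
qed

lemma block_invariant_cbar:
  assumes "k \<ge> 2" "n \<ge> 1" "stable n k c0"
  shows "block_invariant (k-1) n ((cbar k c0)(0 := 0))"
  unfolding block_invariant_def
proof (intro bexI conjI ballI)
  let ?d = "(cbar k c0)(0 := 0)"
  have low: "c0 v < k - 1" if "v \<in> {1..(k-1)*n}" for v
  proof -
    have "c0 v \<le> k - 2" using assms(3) that by (auto simp: stable_def hp_r_def mult.commute)
    then show ?thesis using assms(1) by linarith
  qed
  have "k - 1 \<le> (k-1)*n" using assms(2) by simp
  then have "?d v \<le> k - 1" if v: "v \<in> {(k-1)*(1-1)<..(k-1)*1}" for v
  proof -
    have "v \<le> k - 1" using v by simp
    then have "v \<in> {1..(k-1)*n}" using v order_trans[OF _ \<open>k - 1 \<le> (k-1)*n\<close>] by simp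
    then show ?thesis using low[of v] v by (simp add: cbar_def)
  qed
  moreover have "(k-1)*(1-1) < (k-1)*1" using assms(1) by simp
  ultimately show "active_block (k-1) ?d 1"
    by (intro active_block_of_zero_left) auto
  show "?d v < k - 1" if "v \<in> {(k-1)*1<..(k-1)*n}" for v
    using that low[of v] by (auto simp: cbar_def)
qed (use assms(2) in auto)

lemma reach_block_invariant:
  assumes "k \<ge> 2" "n \<ge> 1" "stable n k c0" "reach n k c0 c"
  shows "\<exists>b. block_invariant (k-1) n (c(0 := b)) \<and> b + weight n k c = weight n k c0 + (k - 1)"
  using assms(4)
proof (induction rule: reach.induct)
  case start
  show ?case
  proof (intro exI[of _ 0] conjI)
    show "block_invariant (k-1) n ((cbar k c0)(0 := 0))"
      by (rule block_invariant_cbar[OF assms(1-3)])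
    show "0 + weight n k (cbar k c0) = weight n k c0 + (k - 1)"
      by (simp add: weight_cbar[OF assms(2)])
  qed
next
  case (step c t)
  obtain b where inv: "block_invariant (k-1) n (c(0 := b))"
    and bank: "b + weight n k c = weight n k c0 + (k - 1)"
    using step.IH by blast
  let ?u = "u_fire n k c"
  let ?d = "fire_at (k-1) (c(0 := b)) ?u (hp_edge k t)"
  have "\<not> stable n k (c(0 := b))" using step.hyps(2) by simp
  note loaded = u_fire_loaded[OF assms(1) this, unfolded u_fire_upd_0]
  have "1 \<le> k - 1" using assms(1) by simp
  moreover have "?u \<in> {(k-1)*(t-1)..(k-1)*t}" using step.hyps(4) by (simp only: hp_edge_eq)
  ultimately have inv': "block_invariant (k-1) n ?d"
    unfolding hp_edge_eq by (rule block_invariant_fire[OF _ inv loaded step.hyps(3)])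
  have "?u \<noteq> 0" using loaded(1) by auto
  then have bank_kept: "(fire_on n k c (hp_edge k t))(0 := ?d 0) = ?d"
    by (rule fire_at_upd_0[symmetric])
  have "?d 0 + weight n k (fire_on n k c (hp_edge k t)) = (\<Sum>v=0..hp_r n k. ?d v)"
    unfolding weight_def sum_upd_0[symmetric] bank_kept ..
  also have "\<dots> = (\<Sum>v=0..hp_r n k. (c(0 := b)) v)"
    using loaded step.hyps(3,4) hp_edge_subset[of t n k] card_hp_edge[of t k]
    by (intro sum_fire_at) auto
  finally have "?d 0 + weight n k (fire_on n k c (hp_edge k t)) = b + weight n k c"
    unfolding weight_def sum_upd_0 .
  then show ?case
  proof (intro exI[of _ "?d 0"] conjI)
    show "block_invariant (k-1) n ((fire_on n k c (hp_edge k t))(0 := ?d 0))"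
      unfolding bank_kept by (rule inv')
  qed (use bank in linarith)
qed

lemma firing_graph_fired_junction_iff:
  assumes "n \<ge> 1" "k \<ge> 2" "stable n k c0"
    and c: "c \<in> firing_graph_vertices n k c0" and t: "t \<in> {1..n}"
  shows "(\<not> stable n k c \<and> u_fire n k c = t * (k - 1)) \<longleftrightarrow> c (t * (k - 1)) = k - 1"
proof (cases "stable n k c")
  case True
  have "t * (k - 1) \<in> {1..hp_r n k}" using assms(2) t by (auto simp: hp_r_def)
  then have "c (t * (k - 1)) \<le> k - 2" using True by (simp add: stable_def)
  then show ?thesis using True assms(2) by auto
next
  case False
  then have "reach n k c0 c" using assms(3) c by (auto simp: firing_graph_vertices_def)
  then obtain b where inv: "block_invariant (k-1) n (c(0 := b))"
    using reach_block_invariant assms(1-3) by blast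
  have "\<not> stable n k (c(0 := b))" using False by simp
  note loaded = u_fire_loaded[OF assms(2) this, unfolded u_fire_upd_0]
  have "1 \<le> k - 1" using assms(2) by simp
  then have "u_fire n k c = (k-1)*t \<longleftrightarrow> (c(0 := b)) ((k-1)*t) = k - 1"
    by (rule block_invariant_junction_iff[OF _ inv loaded t])
  moreover have "(k-1)*t \<noteq> 0" using assms(2) t by simp
  ultimately show ?thesis using False by (simp add: mult.commute)
qed

lemma firing_graph_weight_ge:
  assumes "n \<ge> 1" "k \<ge> 2" "stable n k c0" and c: "c \<in> firing_graph_vertices n k c0"
  shows "weight n k c0 \<le> weight n k c"
proof (cases "c = c0")
  case False
  then have "reach n k c0 c" using c by (simp add: firing_graph_vertices_def)
  then obtain b where "block_invariant (k-1) n (c(0 := b))"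
    and bank: "b + weight n k c = weight n k c0 + (k - 1)"
    using reach_block_invariant assms(1-3) by blast
  then have "b \<le> k - 1" using block_invariant_bank_le by fastforce
  then show ?thesis using bank by linarith
qed simp

theorem lemma4p1:
  fixes n k :: nat and c0 :: "nat \<Rightarrow> nat"
  assumes "n \<ge> 1" and "k \<ge> 2"
    and "is_config n k c0" and "stable n k c0"
  shows "(\<forall>t\<in>{1..n}. \<forall>c\<in>firing_graph_vertices n k c0.
            (\<not> stable n k c \<and> u_fire n k c = t * (k - 1)) \<longleftrightarrow> c (t * (k - 1)) = k - 1)
       \<and> (\<forall>c\<in>firing_graph_vertices n k c0. weight n k c \<ge> weight n k c0)"
  using firing_graph_fired_junction_iff[OF assms(1,2,4)] firing_graph_weight_ge[OF assms(1,2,4)]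
  by blast

end
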